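(* For every vertex $t\in\mathbb T_n$, $\tilde G_t\tilde B_t=\tilde B_{t_0}C_t$.
   Context: $m\ge n\ge1$, $[b]_+=\max(b,0)$. $\mathbb T_n$ is the $n$-regular tree with edges labeled $1,\dots,n$, distinct labels at each vertex; $t\overset{k}{-}t'$ denotes an edge labeled $k$; $t_0$ a root. Fix positive integers $r_1,\dots,r_n$, $R=\mathrm{diag}(r_1,\dots,r_n)$, and an integer $m\times n$ matrix $\tilde B=(b_{ij})$ whose top $n\times n$ part $B$ is skew-symmetrizable (in the paper $\tilde B$ is part of a compatible pair $(\tilde B,\Lambda)$ of an $(R,\mathbf h)$-quantum seed). Assign matrices $\tilde B_t=(b_{ij;t})$ ($m\times n$) with $\tilde B_{t_0}=\tilde B$ and, for $t\overset{k}{-}t'$, $\tilde B_{t'}=E\tilde B_tF$ where $E$ is the $m\times m$ identity with $k$-th column replaced by $-1$ at position $k$ and $[-\varepsilon b_{ik;t}r_k]_+$ at positions $i\neq k$, and $F$ is the $n\times n$ identity with $k$-th row replaced by $-1$ at position $k$ and $[\varepsilon r_kb_{ki;t}]_+$ at positions $i\ne k$ (equivalently $b_{ij;t'}=-b_{ij;t}$ if $i=k$ or $j=k$, else $b_{ij;t}+r_k([-\varepsilon b_{ik;t}]_+b_{kj;t}+b_{ik;t}[\varepsilon b_{kj;t}]_+)$); here and below $\varepsilon\in\{\pm1\}$ and the results are independent of it. Let $B_t$ be the top $n\times n$ part of $\tilde B_t$. The $n\times n$ matrix $C_t=(c_{ij;t})$ is defined by $C_{t_0}=I_n$ and $c_{ij;t'}=-c_{ij;t}$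 if $j=k$, else $c_{ij;t}+r_k(c_{ik;t}[\varepsilon b_{kj;t}]_++[-\varepsilon c_{ik;t}]_+b_{kj;t})$. The $m\times m$ matrix $\tilde G_t$ with columns $\tilde{\mathbf g}_{i;t}$ is defined by $\tilde G_{t_0}=I_m$ and $\tilde{\mathbf g}_{i;t'}=\tilde{\mathbf g}_{i;t}$ for $i\ne k$, $\tilde{\mathbf g}_{k;t'}=-\tilde{\mathbf g}_{k;t}+r_k\big(\sum_{j=1}^m[-\varepsilon b_{jk;t}]_+\tilde{\mathbf g}_{j;t}-\sum_{j=1}^n[-\varepsilon c_{jk;t}]_+\mathbf b_{j;t_0}\big)$, where $\mathbf b_{j;t_0}$ is the $j$-th column of $\tilde B$. *)

theory Defs
  imports Main
begin

text \<open>Integer matrices are functions nat => nat => int, indices 1-based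
  (row i, column j). Only entries with 1 <= i <= m, 1 <= j <= n (resp. m, m)
  are meaningful.\<close>

type_synonym imat = "nat \<Rightarrow> nat \<Rightarrow> int"

definition pos :: "int \<Rightarrow> int" where
  "pos b = max b 0"

definition skew_symmetrizable :: "nat \<Rightarrow> imat \<Rightarrow> bool" where
  "skew_symmetrizable n B \<longleftrightarrow>
     (\<exists>d :: nat \<Rightarrow> int. (\<forall>i\<in>{1..n}. d i > 0) \<and>
        (\<forall>i\<in>{1..n}. \<forall>j\<in>{1..n}. d i * B i j = - (d j * B j i)))"

definition mutB :: "(nat \<Rightarrow> int) \<Rightarrow> nat \<Rightarrow> int \<Rightarrow> imat \<Rightarrow> imat" where
  "mutB r k e B = (\<lambda>i j. if i = k \<or> j = k then - B i j
      else B i j + r k * (pos (- e * B i k) * B k j + B i k * pos (e * B k j)))"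

definition mutC :: "(nat \<Rightarrow> int) \<Rightarrow> nat \<Rightarrow> int \<Rightarrow> imat \<Rightarrow> imat \<Rightarrow> imat" where
  "mutC r k e B C = (\<lambda>i j. if j = k then - C i j
      else C i j + r k * (C i k * pos (e * B k j) + pos (- e * C i k) * B k j))"

text \<open>Mutation of the extended G-matrix (column j is the vector g_j);
  B0 is the initial matrix, B = B_t, C = C_t.\<close>
definition mutG :: "nat \<Rightarrow> nat \<Rightarrow> (nat \<Rightarrow> int) \<Rightarrow> nat \<Rightarrow> int \<Rightarrow> imat \<Rightarrow> imat \<Rightarrow> imat \<Rightarrow> imat \<Rightarrow> imat" where
  "mutG m n r k e B0 B C G = (\<lambda>i j. if j \<noteq> k then G i j
      else - G i k + r k * ((\<Sum>l=1..m. pos (- e * B l k) * G i l)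
                           - (\<Sum>l=1..n. pos (- e * C l k) * B0 i l)))"

definition idm :: imat where
  "idm = (\<lambda>i j. if i = j then 1 else 0)"

definition mut_step :: "nat \<Rightarrow> nat \<Rightarrow> (nat \<Rightarrow> int) \<Rightarrow> imat \<Rightarrow> imat \<times> imat \<times> imat \<Rightarrow> nat \<times> int \<Rightarrow> imat \<times> imat \<times> imat" where
  "mut_step m n r B0 S ke = (case S of (B, C, G) \<Rightarrow> (case ke of (k, e) \<Rightarrow>
      (mutB r k e B, mutC r k e B C, mutG m n r k e B0 B C G)))"

text \<open>The triple (B_t, C_t, G_t) at the vertex t reached from t_0 along the
  path whose successive edges have the labels and signs in the list
  (the first list element is the edge at t_0).\<close>
definition seed :: "nat \<Rightarrow> nat \<Rightarrow> (nat \<Rightarrow> int) \<Rightarrow> imat \<Rightarrow> (nat \<times> int) list \<Rightarrow> imat \<times> imat \<times> imat" where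
  "seed m n r B0 path = foldl (mut_step m n r B0) (B0, idm, idm) path"

text \<open>Vertices of the n-regular tree T_n correspond bijectively to the
  label sequences of paths from t_0 without backtracking: labels in {1..n},
  consecutive labels distinct.\<close>
definition tree_path :: "nat \<Rightarrow> nat list \<Rightarrow> bool" where
  "tree_path n ks \<longleftrightarrow> set ks \<subseteq> {1..n} \<and>
     (\<forall>i. Suc i < length ks \<longrightarrow> ks ! i \<noteq> ks ! Suc i)"

end

theory Submission imports Defs begin

(*
  Consider the defect D_t = G_t B_t - B_{t_0} C_t. Comparing the mutation rules entrywise
  shows that, as long as b_kk = 0, one mutation in direction k turns D_t into D_t F with
  F the matrix of the B-mutation: column k of D_t is negated and r_k [e b_kj]_+ times
  column k is added to column j. Hence D_t = 0 propagates from D_{t_0} = 0.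
  The diagonal of B_t stays zero because every B_t is skew-symmetrized by the same
  diagonal matrix as B_{t_0}.
*)

definition mat_mult :: "nat \<Rightarrow> imat \<Rightarrow> imat \<Rightarrow> imat" where
  "mat_mult p A B = (\<lambda>i j. \<Sum>l=1..p. A i l * B l j)"

lemma mat_mult_idm_left: "i \<in> {1..p} \<Longrightarrow> mat_mult p idm A i j = A i j"
  by (simp add: mat_mult_def idm_def of_bool_def[symmetric] sum.delta)

lemma mat_mult_idm_right: "j \<in> {1..p} \<Longrightarrow> mat_mult p A idm i j = A i j"
  by (simp add: mat_mult_def idm_def of_bool_def[symmetric] sum.delta')

definition skew_symmetrizer :: "nat \<Rightarrow> (nat \<Rightarrow> int) \<Rightarrow> imat \<Rightarrow> bool" where
  "skew_symmetrizer n d B \<longleftrightarrow> (\<forall>i\<in>{1..n}. d i > 0) \<and>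
     (\<forall>i\<in>{1..n}. \<forall>j\<in>{1..n}. d i * B i j = - (d j * B j i))"

lemma skew_symmetrizable_iff: "skew_symmetrizable n B \<longleftrightarrow> (\<exists>d. skew_symmetrizer n d B)"
  unfolding skew_symmetrizable_def skew_symmetrizer_def ..

lemma skew_symmetrizer_diag_zero:
  assumes "skew_symmetrizer n d B" and "k \<in> {1..n}"
  shows "B k k = 0"
proof -
  have "d k * B k k = - (d k * B k k)" and "d k > 0"
    using assms unfolding skew_symmetrizer_def by blast+
  then show ?thesis by simp
qed

lemma pos_mult_pos: "(d::int) > 0 \<Longrightarrow> d * pos x = pos (d * x)"
  unfolding pos_def by (auto simp: max_def mult_le_0_iff)

lemma skew_pos_sign:
  fixes di dk bik bki e :: int
  assumes "di > 0" and "dk > 0" and "di * bik = - (dk * bki)"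
  shows "di * pos (- e * bik) = dk * pos (e * bki)"
proof -
  have "di * (- e * bik) = dk * (e * bki)"
    using assms(3) by (metis minus_mult_minus mult.left_commute)
  then show ?thesis using assms(1,2) by (simp add: pos_mult_pos)
qed

lemma skew_symmetrizer_mutB:
  assumes skew: "skew_symmetrizer n d B" and k: "k \<in> {1..n}"
  shows "skew_symmetrizer n d (mutB r k e B)"
  unfolding skew_symmetrizer_def
proof (intro conjI ballI)
  have dpos: "\<And>i. i \<in> {1..n} \<Longrightarrow> d i > 0"
   and sk: "\<And>i j. i \<in> {1..n} \<Longrightarrow> j \<in> {1..n} \<Longrightarrow> d i * B i j = - (d j * B j i)"
    using skew unfolding skew_symmetrizer_def by blast+
  show "\<And>i. i \<in> {1..n} \<Longrightarrow> d i > 0" by (fact dpos)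
  fix i j assume i: "i \<in> {1..n}" and j: "j \<in> {1..n}"
  show "d i * mutB r k e B i j = - (d j * mutB r k e B j i)"
  proof (cases "i = k \<or> j = k")
    case True
    then show ?thesis using sk[OF i j] by (auto simp: mutB_def)
  next
    case False
    have Pi: "d i * pos (- e * B i k) = d k * pos (e * B k i)"
      and Pj: "d j * pos (- e * B j k) = d k * pos (e * B k j)"
      using skew_pos_sign[OF dpos[OF i] dpos[OF k] sk[OF i k]]
        skew_pos_sign[OF dpos[OF j] dpos[OF k] sk[OF j k]] by simp_all
    have "d i * mutB r k e B i j + d j * mutB r k e B j i
        = (d i * B i j + d j * B j i) + r k * ((d i * pos (- e * B i k)) * B k j
            + (d i * B i k) * pos (e * B k j) + (d j * pos (- e * B j k)) * B k i
            + (d j * B j k) * pos (e * B k i))"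
      using False by (simp add: mutB_def algebra_simps)
    also have "\<dots> = 0"
      unfolding Pi Pj sk[OF i j] sk[OF i k] sk[OF j k] by (simp add: algebra_simps)
    finally show ?thesis by simp
  qed
qed

lemma mat_mult_mutC:
  "mat_mult n B0 (mutC r k e B C) i j =
     (if j = k then - mat_mult n B0 C i k
      else mat_mult n B0 C i j + r k * pos (e * B k j) * mat_mult n B0 C i k
           + r k * B k j * (\<Sum>l=1..n. B0 i l * pos (- e * C l k)))"
  by (simp add: mat_mult_def mutC_def sum_negf sum.distrib sum_distrib_left algebra_simps)

lemma mat_mult_mutG_mutB:
  assumes k: "k \<in> {1..m}" and Bkk: "B k k = 0"
  shows "mat_mult m (mutG m n r k e B0 B C G) (mutB r k e B) i j =
     (if j = k then - mat_mult m G B i k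
      else mat_mult m G B i j + r k * pos (e * B k j) * mat_mult m G B i k
           + r k * B k j * (\<Sum>l=1..n. B0 i l * pos (- e * C l k)))"
proof -
  define A where "A = {1..m} - {k}"
  define G' where "G' = mutG m n r k e B0 B C G"
  define S where "S = (\<Sum>l=1..n. B0 i l * pos (- e * C l k))"
  have split_k: "\<And>f. (\<Sum>l=1..m. f l) = f k + (\<Sum>l\<in>A. f l)"
    using k by (simp add: A_def sum.remove)
  have G'_A: "\<And>l. l \<in> A \<Longrightarrow> G' i l = G i l"
    by (simp add: A_def G'_def mutG_def)
  have GB_k: "mat_mult m G B i k = (\<Sum>l\<in>A. G i l * B l k)"
    using split_k[of "\<lambda>l. G i l * B l k"] Bkk by (simp add: mat_mult_def)
  have G'_k: "G' i k = - G i k + r k * ((\<Sum>l\<in>A. G i l * pos (- e * B l k)) - S)"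
    using split_k[of "\<lambda>l. pos (- e * B l k) * G i l"] Bkk
    by (simp add: G'_def mutG_def S_def pos_def mult.commute)
  have expand: "mat_mult m G' (mutB r k e B) i j
      = G' i k * mutB r k e B k j + (\<Sum>l\<in>A. G i l * mutB r k e B l j)"
    unfolding mat_mult_def split_k[of "\<lambda>l. G' i l * mutB r k e B l j"]
    by (simp add: G'_A)
  show ?thesis
  proof (cases "j = k")
    case True
    then have "mat_mult m G' (mutB r k e B) i j = - (\<Sum>l\<in>A. G i l * B l k)"
      unfolding expand using Bkk by (simp add: mutB_def sum_negf)
    then show ?thesis using GB_k True by (simp add: G'_def)
  next
    case False
    have "mat_mult m G' (mutB r k e B) i j = G' i k * - B k j
        + (\<Sum>l\<in>A. G i l * (B l j + r k * (pos (- e * B l k) * B k j + B l k * pos (e * B k j))))"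
      unfolding expand using False by (simp add: A_def mutB_def)
    also have "\<dots> = G' i k * - B k j + (\<Sum>l\<in>A. G i l * B l j)
        + r k * B k j * (\<Sum>l\<in>A. G i l * pos (- e * B l k))
        + r k * pos (e * B k j) * (\<Sum>l\<in>A. G i l * B l k)"
      by (simp add: sum.distrib sum_distrib_left algebra_simps)
    also have "\<dots> = mat_mult m G B i j + r k * pos (e * B k j) * mat_mult m G B i k
        + r k * B k j * S"
      using split_k[of "\<lambda>l. G i l * B l j"] unfolding G'_k GB_k
      by (simp add: mat_mult_def algebra_simps)
    finally show ?thesis using False by (simp add: G'_def S_def)
  qed
qed

lemma mat_mult_mutG_mutB_eq_mutC:
  assumes "k \<in> {1..m}" and "B k k = 0"
    and "mat_mult m G B i j = mat_mult n B0 C i j"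
    and "mat_mult m G B i k = mat_mult n B0 C i k"
  shows "mat_mult m (mutG m n r k e B0 B C G) (mutB r k e B) i j
       = mat_mult n B0 (mutC r k e B C) i j"
  using assms by (simp add: mat_mult_mutG_mutB mat_mult_mutC)

lemma seed_snoc: "seed m n r B0 (path @ [x]) = mut_step m n r B0 (seed m n r B0 path) x"
  unfolding seed_def by simp

lemma seed_skew_and_GB_eq_B0C:
  assumes nm: "n \<le> m" and skew0: "skew_symmetrizer n d B0"
    and "set (map fst path) \<subseteq> {1..n}" and "seed m n r B0 path = (Bt, Ct, Gt)"
  shows "skew_symmetrizer n d Bt \<and>
    (\<forall>i\<in>{1..m}. \<forall>j\<in>{1..n}. mat_mult m Gt Bt i j = mat_mult n B0 Ct i j)"
  using assms(3,4)
proof (induction path arbitrary: Bt Ct Gt rule: rev_induct)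
  case Nil
  then have "Bt = B0" "Ct = idm" "Gt = idm" by (simp_all add: seed_def)
  with skew0 nm show ?case by (auto simp: mat_mult_idm_left mat_mult_idm_right)
next
  case (snoc x path)
  obtain B C G where seed: "seed m n r B0 path = (B, C, G)" by (metis prod_cases3)
  obtain k e where x: "x = (k, e)" by fastforce
  have k: "k \<in> {1..n}" using snoc.prems(1) x by simp
  have skew: "skew_symmetrizer n d B"
    and inv: "\<forall>i\<in>{1..m}. \<forall>j\<in>{1..n}. mat_mult m G B i j = mat_mult n B0 C i j"
    using snoc.IH[OF _ seed] snoc.prems(1) by auto
  have "Bt = mutB r k e B" "Ct = mutC r k e B C" "Gt = mutG m n r k e B0 B C G"
    using snoc.prems(2) by (simp_all add: seed_snoc seed x mut_step_def)
  moreover have "k \<in> {1..m}" using k nm by simp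
  ultimately show ?case
    using skew_symmetrizer_mutB[OF skew k] skew_symmetrizer_diag_zero[OF skew k] inv k
    by (simp add: mat_mult_mutG_mutB_eq_mutC)
qed

theorem mainTheorem7:
  fixes m n :: nat and r :: "nat \<Rightarrow> int" and B0 :: imat
    and path :: "(nat \<times> int) list"
  assumes "1 \<le> n" and "n \<le> m"
    and "\<forall>k\<in>{1..n}. r k > 0"
    and "skew_symmetrizable n B0"
    and "tree_path n (map fst path)"
    and "\<forall>e\<in>set (map snd path). e = 1 \<or> e = -1"
    and "seed m n r B0 path = (Bt, Ct, Gt)"
  shows "\<forall>i\<in>{1..m}. \<forall>j\<in>{1..n}.
           (\<Sum>l=1..m. Gt i l * Bt l j) = (\<Sum>l=1..n. B0 i l * Ct l j)"
proof -
  obtain d where "skew_symmetrizer n d B0"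
    using assms(4) by (auto simp: skew_symmetrizable_iff)
  moreover have "set (map fst path) \<subseteq> {1..n}"
    using assms(5) by (simp add: tree_path_def)
  ultimately show ?thesis
    using seed_skew_and_GB_eq_B0C[OF assms(2)] assms(7) by (simp add: mat_mult_def)
qed

end
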